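(* Let $k\ge1$ and $S_a,S_b\in\{0,1\}^{k^2}$. Let $G$ be the directed unweighted graph on vertices $\ell_i,\ell_i',r_i,r_i'$ ($1\le i\le k$) with edges $(\ell_i,r_i)$ and $(r_i',\ell_i')$ for each $i$, the edge $(\ell_j',\ell_i)$ whenever $S_a[(i-1)k+j]=1$, and the edge $(r_i,r_j')$ whenever $S_b[(i-1)k+j]=1$. If there is an index $m$ with $S_a[m]=S_b[m]=1$, then $G$ contains a directed cycle of length $4$; otherwise every directed cycle of $G$ has length at least $8$.
   Context: For a bit string $S$, $S[m]$ denotes its $m$-th bit. *)

theory Defs
  imports Main
begin

datatype vert = L nat | L' nat | R nat | R' nat

text \<open>Bit strings S in {0,1}^n are lists of booleans of length n; the m-th bit
 (1-indexed, 1 <= m <= n) is S ! (m - 1).\<close>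
definition bit :: "bool list \<Rightarrow> nat \<Rightarrow> bool" where
  "bit S m = S ! (m - 1)"

definition vertices :: "nat \<Rightarrow> vert set" where
  "vertices k = {v. \<exists>i\<in>{1..k}. v = L i \<or> v = L' i \<or> v = R i \<or> v = R' i}"

definition edge :: "nat \<Rightarrow> bool list \<Rightarrow> bool list \<Rightarrow> vert \<Rightarrow> vert \<Rightarrow> bool" where
  "edge k Sa Sb u v \<longleftrightarrow>
     (\<exists>i\<in>{1..k}. u = L i \<and> v = R i) \<or>
     (\<exists>i\<in>{1..k}. u = R' i \<and> v = L' i) \<or>
     (\<exists>i\<in>{1..k}. \<exists>j\<in>{1..k}. u = L' j \<and> v = L i \<and> bit Sa ((i - 1) * k + j)) \<or>
     (\<exists>i\<in>{1..k}. \<exists>j\<in>{1..k}. u = R i \<and> v = R' j \<and> bit Sb ((i - 1) * k + j))"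

definition is_cycle :: "(vert \<Rightarrow> vert \<Rightarrow> bool) \<Rightarrow> vert list \<Rightarrow> bool" where
  "is_cycle E vs \<longleftrightarrow> vs \<noteq> [] \<and> distinct vs \<and>
     (\<forall>t < length vs. E (vs ! t) (vs ! ((t + 1) mod length vs)))"

end

theory Submission
  imports Defs
begin

text \<open>Every edge leads from one of the four vertex classes l, r, r', l' to the next one in
  this cyclic order, so every directed cycle has length divisible by 4. A 4-cycle therefore
  runs through exactly one vertex of each class, hence has the form
  l_i \<rightarrow> r_i \<rightarrow> r_j' \<rightarrow> l_j' \<rightarrow> l_i, which exists exactly when both
  strings have a 1 at position (i - 1) k + j.\<close>

fun layer :: "vert \<Rightarrow> nat" where
  "layer (L _) = 0" | "layer (R _) = 1" | "layer (R' _) = 2" | "layer (L' _) = 3"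

lemma edge_raises_layer: "edge k Sa Sb u v \<Longrightarrow> layer v = (layer u + 1) mod 4"
  unfolding edge_def by auto

lemma edge_from_L: "edge k Sa Sb (L i) v \<longleftrightarrow> i \<in> {1..k} \<and> v = R i"
  unfolding edge_def by auto

lemma edge_from_R: "edge k Sa Sb (R i) v \<longleftrightarrow>
    (\<exists>j\<in>{1..k}. i \<in> {1..k} \<and> v = R' j \<and> bit Sb ((i - 1) * k + j))"
  unfolding edge_def by auto

lemma edge_from_R': "edge k Sa Sb (R' j) v \<longleftrightarrow> j \<in> {1..k} \<and> v = L' j"
  unfolding edge_def by auto

lemma edge_from_L': "edge k Sa Sb (L' j) v \<longleftrightarrow>
    (\<exists>i\<in>{1..k}. j \<in> {1..k} \<and> v = L i \<and> bit Sa ((i - 1) * k + j))"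
  unfolding edge_def by auto

lemma closed_walk4_common_bit:
  assumes "edge k Sa Sb a b" "edge k Sa Sb b c" "edge k Sa Sb c d" "edge k Sa Sb d a"
  shows "\<exists>i\<in>{1..k}. \<exists>j\<in>{1..k}. bit Sa ((i - 1) * k + j) \<and> bit Sb ((i - 1) * k + j)"
  using assms
  by (cases a; auto simp: edge_from_L edge_from_R edge_from_R' edge_from_L'; meson atLeastAtMost_iff)

lemma cycle_length_dvd:
  fixes h :: "vert \<Rightarrow> nat"
  assumes cyc: "is_cycle E vs" and graded: "\<And>u v. E u v \<Longrightarrow> h v = (h u + 1) mod n"
  shows "n dvd length vs"
proof -
  define N where "N = length vs"
  have "N > 0" using cyc unfolding is_cycle_def N_def by simp
  have walk: "h (vs ! (t mod N)) mod n = (h (vs ! 0) + t) mod n" for t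
  proof (induction t)
    case 0 then show ?case by simp
  next
    case (Suc t)
    have "E (vs ! (t mod N)) (vs ! ((t mod N + 1) mod N))"
      using cyc \<open>N > 0\<close> unfolding is_cycle_def N_def by simp
    then have "h (vs ! (Suc t mod N)) mod n = (h (vs ! (t mod N)) mod n + 1) mod n"
      by (simp add: graded mod_Suc_eq mod_add_left_eq)
    also have "\<dots> = (h (vs ! 0) + Suc t) mod n"
      using Suc.IH by (simp add: mod_Suc_eq)
    finally show ?case .
  qed
  have "(h (vs ! 0) + N) mod n = h (vs ! 0) mod n"
    using walk[of N] by simp
  then show ?thesis
    unfolding N_def using mod_eq_dvd_iff_nat[of "h (vs ! 0)" "h (vs ! 0) + length vs" n] by simp
qed

lemma mem_square_range_iff_pair_index:
  fixes k :: nat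
  shows "m \<in> {1..k^2} \<longleftrightarrow> (\<exists>i\<in>{1..k}. \<exists>j\<in>{1..k}. m = (i - 1) * k + j)"
proof
  assume m: "m \<in> {1..k^2}"
  then have "k > 0" by (auto intro: Nat.gr0I)
  define i j where "i = (m - 1) div k + 1" and "j = (m - 1) mod k + 1"
  have "m - 1 < k * k" using m by (auto simp: power2_eq_square)
  then have "(m - 1) div k < k" using \<open>k > 0\<close> by (simp add: div_less_iff_less_mult)
  then have "i \<in> {1..k}" unfolding i_def by simp
  moreover have "j \<in> {1..k}" unfolding j_def using \<open>k > 0\<close> by (simp add: Suc_le_eq)
  moreover have "m = (i - 1) * k + j" unfolding i_def j_def using m by simp
  ultimately show "\<exists>i\<in>{1..k}. \<exists>j\<in>{1..k}. m = (i - 1) * k + j" by blast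
next
  assume "\<exists>i\<in>{1..k}. \<exists>j\<in>{1..k}. m = (i - 1) * k + j"
  then obtain i j where "i \<in> {1..k}" "j \<in> {1..k}" "m = (i - 1) * k + j" by blast
  moreover have "(i - 1) * k + j \<le> (k - 1) * k + k"
    using calculation by (intro add_mono mult_le_mono1) auto
  ultimately show "m \<in> {1..k^2}" by (cases k) (auto simp: power2_eq_square)
qed

lemma is_cycle_four:
  "is_cycle E [a, b, c, d] \<longleftrightarrow> distinct [a, b, c, d] \<and> E a b \<and> E b c \<and> E c d \<and> E d a"
  unfolding is_cycle_def by (simp add: All_less_Suc2 conj_ac)

lemma four_cycle_iff_common_bit:
  "(\<exists>vs. is_cycle (edge k Sa Sb) vs \<and> length vs = 4) \<longleftrightarrow>
   (\<exists>i\<in>{1..k}. \<exists>j\<in>{1..k}. bit Sa ((i - 1) * k + j) \<and> bit Sb ((i - 1) * k + j))"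
proof
  assume "\<exists>vs. is_cycle (edge k Sa Sb) vs \<and> length vs = 4"
  then obtain a b c d where "is_cycle (edge k Sa Sb) [a, b, c, d]"
    by (auto simp: length_Suc_conv numeral_eq_Suc)
  then show "\<exists>i\<in>{1..k}. \<exists>j\<in>{1..k}. bit Sa ((i - 1) * k + j) \<and> bit Sb ((i - 1) * k + j)"
    unfolding is_cycle_four by (blast intro: closed_walk4_common_bit)
next
  assume "\<exists>i\<in>{1..k}. \<exists>j\<in>{1..k}. bit Sa ((i - 1) * k + j) \<and> bit Sb ((i - 1) * k + j)"
  then obtain i j where "i \<in> {1..k}" "j \<in> {1..k}"
    and "bit Sa ((i - 1) * k + j)" "bit Sb ((i - 1) * k + j)" by blast
  then have "is_cycle (edge k Sa Sb) [L i, R i, R' j, L' j]"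
    by (simp add: is_cycle_four edge_from_L edge_from_R edge_from_R' edge_from_L')
  then show "\<exists>vs. is_cycle (edge k Sa Sb) vs \<and> length vs = 4"
    by (intro exI[of _ "[L i, R i, R' j, L' j]"]) simp
qed

theorem mainTheorem6:
  fixes k :: nat and Sa Sb :: "bool list"
  assumes "k \<ge> 1" and "length Sa = k ^ 2" and "length Sb = k ^ 2"
  shows "((\<exists>m\<in>{1..k^2}. bit Sa m \<and> bit Sb m) \<longrightarrow>
            (\<exists>vs. is_cycle (edge k Sa Sb) vs \<and> length vs = 4))
       \<and> ((\<not> (\<exists>m\<in>{1..k^2}. bit Sa m \<and> bit Sb m)) \<longrightarrow>
            (\<forall>vs. is_cycle (edge k Sa Sb) vs \<longrightarrow> length vs \<ge> 8))"
proof -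
  have common_bit_iff: "(\<exists>m\<in>{1..k^2}. bit Sa m \<and> bit Sb m) \<longleftrightarrow>
      (\<exists>i\<in>{1..k}. \<exists>j\<in>{1..k}. bit Sa ((i - 1) * k + j) \<and> bit Sb ((i - 1) * k + j))"
    unfolding Bex_def mem_square_range_iff_pair_index by blast
  show ?thesis
  proof (intro conjI impI allI)
    assume "\<exists>m\<in>{1..k^2}. bit Sa m \<and> bit Sb m"
    then show "\<exists>vs. is_cycle (edge k Sa Sb) vs \<and> length vs = 4"
      by (simp only: common_bit_iff four_cycle_iff_common_bit)
  next
    fix vs
    assume "\<not> (\<exists>m\<in>{1..k^2}. bit Sa m \<and> bit Sb m)" and cyc: "is_cycle (edge k Sa Sb) vs"
    then have "length vs \<noteq> 4"
      by (auto simp only: common_bit_iff four_cycle_iff_common_bit[symmetric])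
    moreover have "4 dvd length vs" using cycle_length_dvd[OF cyc edge_raises_layer] .
    moreover have "length vs \<noteq> 0" using cyc by (simp add: is_cycle_def)
    ultimately show "length vs \<ge> 8" by presburger
  qed
qed
end
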